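(* Let $C\subseteq[n]$ (viewed as a single column of boxes of $[n]^2$, with a box in row $i$ for each $i\in C$), and let $r_C$ be the rank function of the Schubert matroid $SM_n(C)$. Let $S$ be a $k$-subset of $[n]$ and let $\pi=\pi_1\pi_2\cdots\pi_k$ be any ordering of the elements of $S$. Then \[r_C(S)=|\mathcal{F}_\pi(C)|.\]
   Context: For $T=\{a_1<\cdots<a_k\}$ and $S=\{b_1<\cdots<b_k\}$ subsets of $[n]$, write $T\le S$ if $\#T=\#S$ and $a_i\le b_i$ for all $i$. The Schubert matroid $SM_n(C)$ is the matroid on $[n]$ whose bases are $\{T\subseteq[n]\colon T\le C\}$; its rank function is $r_C(A)=\max\{\#(A\cap B)\colon B\text{ a basis}\}$. The filling $\mathcal{F}_\pi(C)$: starting with all boxes of $C$ empty, for $t=1,\ldots,k$ in turn place $\pi_t$ into the topmost still-empty box of $C$ whose row index is $\ge\pi_t$; if no such box exists, skip $\pi_t$. $|\mathcal{F}|$ denotes the number of nonempty boxes of a filling $\mathcal{F}$. *)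

theory Defs
  imports Main
begin

definition gale_le :: "nat set \<Rightarrow> nat set \<Rightarrow> bool" where
  "gale_le T S \<longleftrightarrow> card T = card S \<and>
     (\<forall>i < card T. sorted_list_of_set T ! i \<le> sorted_list_of_set S ! i)"

definition schubert_bases :: "nat \<Rightarrow> nat set \<Rightarrow> nat set set" where
  "schubert_bases n C = {T. T \<subseteq> {1..n} \<and> gale_le T C}"

definition schubert_rank :: "nat \<Rightarrow> nat set \<Rightarrow> nat set \<Rightarrow> nat" where
  "schubert_rank n C A = Max ((\<lambda>B. card (A \<inter> B)) ` schubert_bases n C)"

(* A filling of the column C: a partial map from row indices (boxes of C) to entries. *)
definition fill_step :: "nat set \<Rightarrow> (nat \<Rightarrow> nat option) \<Rightarrow> nat \<Rightarrow> (nat \<Rightarrow> nat option)" where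
  "fill_step C F x =
     (let R = {i \<in> C. F i = None \<and> x \<le> i} in
      if R = {} then F else F(Min R \<mapsto> x))"

definition filling :: "nat set \<Rightarrow> nat list \<Rightarrow> (nat \<Rightarrow> nat option)" where
  "filling C \<pi> = foldl (fill_step C) Map.empty \<pi>"

definition filling_size :: "(nat \<Rightarrow> nat option) \<Rightarrow> nat" where
  "filling_size F = card (dom F)"

end

theory Submission
  imports Defs
begin

(* Rows are read top to bottom, so a box is lower when its row index is larger.
   By the tail-count form of the Gale order, a basis B \<le> C has at most #{c \<in> C. t \<le> c}
   elements \<ge> t, hence r_C(S) \<le> #{x \<in> S. x < t} + #{c \<in> C. t \<le> c} for every t.
   Conversely, every entry of the filling is \<le> its row, so the entries have tail counts
   dominated by those of C and extend to a basis: |F| \<le> r_C(S).  Finally, for t just below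
   the lowest empty box, all boxes in rows \<ge> t are filled, and the greedy placement puts
   every x \<in> S with x < t into a box above t, so |F| attains the bound. *)

lemma card_tail_eq_card_sorted_indices:
  assumes "finite T"
  shows "card {x\<in>T. t \<le> x} = card {i. i < card T \<and> t \<le> sorted_list_of_set T ! i}"
proof -
  have "{x\<in>T. t \<le> x} = {x. t \<le> x} \<inter> set (sorted_list_of_set T)"
    using assms by auto
  then show ?thesis
    using distinct_length_filter[of "sorted_list_of_set T" "\<lambda>x. t \<le> x"]
      length_filter_conv_card[of "\<lambda>x. t \<le> x" "sorted_list_of_set T"] assms
    by simp
qed

lemma gale_le_iff_card_tails:
  fixes T S :: "nat set"
  assumes "finite T" "finite S" and card_eq: "card T = card S"
  shows "gale_le T S \<longleftrightarrow> (\<forall>t. card {x\<in>T. t \<le> x} \<le> card {x\<in>S. t \<le> x})"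
proof -
  define ts ss where "ts = sorted_list_of_set T" and "ss = sorted_list_of_set S"
  define N where "N = card T"
  have sorted: "sorted ts" "sorted ss" and len: "length ts = N" "length ss = N"
    using card_eq by (simp_all add: ts_def ss_def N_def)
  have tails: "card {x\<in>T. t \<le> x} = card {i. i < N \<and> t \<le> ts ! i}"
    "card {x\<in>S. t \<le> x} = card {i. i < N \<and> t \<le> ss ! i}" for t
    using card_tail_eq_card_sorted_indices[of T] card_tail_eq_card_sorted_indices[of S] assms
    by (simp_all add: ts_def ss_def N_def)
  have gale: "gale_le T S \<longleftrightarrow> (\<forall>i<N. ts ! i \<le> ss ! i)"
    using card_eq by (simp add: gale_le_def ts_def ss_def N_def)
  show ?thesis
  proof
    assume "gale_le T S"
    then have "{i. i < N \<and> t \<le> ts ! i} \<subseteq> {i. i < N \<and> t \<le> ss ! i}" for t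
      using gale by (auto intro: order_trans)
    then show "\<forall>t. card {x\<in>T. t \<le> x} \<le> card {x\<in>S. t \<le> x}"
      unfolding tails by (simp add: card_mono)
  next
    assume tails_le: "\<forall>t. card {x\<in>T. t \<le> x} \<le> card {x\<in>S. t \<le> x}"
    have "ts ! i \<le> ss ! i" if "i < N" for i
    proof (rule ccontr)
      assume "\<not> ts ! i \<le> ss ! i"
      define t where "t = ts ! i"
      have "{i..<N} \<subseteq> {j. j < N \<and> t \<le> ts ! j}"
        using sorted(1) len(1) by (auto simp: t_def intro: sorted_nth_mono)
      then have "N - i \<le> card {j. j < N \<and> t \<le> ts ! j}"
        by (metis card_atLeastLessThan card_mono finite_Collect_conjI finite_Collect_less_nat)
      moreover have "{j. j < N \<and> t \<le> ss ! j} \<subseteq> {Suc i..<N}"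
        using sorted(2) len(2) \<open>i < N\<close> \<open>\<not> ts ! i \<le> ss ! i\<close>
        by (auto simp: t_def not_less_eq_eq dest: sorted_nth_mono[of ss _ i])
      then have "card {j. j < N \<and> t \<le> ss ! j} \<le> N - Suc i"
        by (metis card_atLeastLessThan card_mono finite_atLeastLessThan)
      moreover have "card {j. j < N \<and> t \<le> ts ! j} \<le> card {j. j < N \<and> t \<le> ss ! j}"
        using tails_le unfolding tails by blast
      ultimately show False using \<open>i < N\<close> by linarith
    qed
    then show "gale_le T S" using gale by blast
  qed
qed

lemma schubert_basis_card_inter_le:
  assumes "B \<in> schubert_bases n C" "finite A" "finite C"
  shows "card (A \<inter> B) \<le> card {x\<in>A. x < t} + card {c\<in>C. t \<le> c}"
proof -
  have "finite B" "gale_le B C"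
    using assms(1) by (simp_all add: schubert_bases_def finite_subset[of B "{1..n}"])
  then have B_tail: "card {x\<in>B. t \<le> x} \<le> card {c\<in>C. t \<le> c}"
    using gale_le_iff_card_tails assms(3) by (auto simp: gale_le_def)
  have "A \<inter> B \<subseteq> {x\<in>A. x < t} \<union> {x\<in>B. t \<le> x}" by auto
  then have "card (A \<inter> B) \<le> card ({x\<in>A. x < t} \<union> {x\<in>B. t \<le> x})"
    using assms(2) \<open>finite B\<close> by (simp add: card_mono)
  also have "\<dots> \<le> card {x\<in>A. x < t} + card {x\<in>B. t \<le> x}"
    by (rule card_Un_le)
  finally show ?thesis using B_tail by linarith
qed

lemma finite_schubert_bases: "finite (schubert_bases n C)"
  by (rule finite_subset[of _ "Pow {1..n}"]) (auto simp: schubert_bases_def)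

lemma schubert_rank_le:
  assumes "C \<subseteq> {1..n}" "finite A"
  shows "schubert_rank n C A \<le> card {x\<in>A. x < t} + card {c\<in>C. t \<le> c}"
proof -
  have "C \<in> schubert_bases n C"
    using assms(1) by (simp add: schubert_bases_def gale_le_def)
  moreover have "finite C" using assms(1) finite_subset by blast
  ultimately show ?thesis
    unfolding schubert_rank_def
    using schubert_basis_card_inter_le[OF _ assms(2)] finite_schubert_bases
    by (intro Max.boundedI) auto
qed

lemma ex_card_Un_atLeastAtMost_eq:
  fixes M :: "nat set"
  assumes "finite M" "card M \<le> m" "m \<le> card (M \<union> {1..n})"
  obtains s where "s \<le> n" "card (M \<union> {1..s}) = m"
proof -
  define g where "g s = int (card (M \<union> {1..s}))" for s
  have "\<bar>g (Suc s) - g s\<bar> \<le> 1" for s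
  proof -
    have "M \<union> {1..Suc s} = insert (Suc s) (M \<union> {1..s})" by auto
    then show ?thesis using assms(1) by (simp add: g_def card_insert_if)
  qed
  then show ?thesis
    using nat0_intermed_int_val[of n g "int m"] assms(2,3) that by (auto simp: g_def)
qed

lemma schubert_independent_subset_basis:
  assumes "M \<subseteq> {1..n}" "C \<subseteq> {1..n}"
    and M_tails: "\<And>t. card {x\<in>M. t \<le> x} \<le> card {c\<in>C. t \<le> c}"
  shows "\<exists>B\<in>schubert_bases n C. M \<subseteq> B"
proof -
  have "finite M" "finite C" using assms(1,2) finite_subset by blast+
  have "card M \<le> card C" using M_tails[of 0] by simp
  moreover have "card C \<le> card (M \<union> {1..n})"
    using assms card_mono[OF _ assms(2)] by (simp add: Un_absorb1)
  ultimately obtain s where "s \<le> n" and "card (M \<union> {1..s}) = card C"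
    using ex_card_Un_atLeastAtMost_eq[OF \<open>finite M\<close>] by blast
  define B where "B = M \<union> {1..s}"
  have "finite B" and card_B: "card B = card C"
    using \<open>finite M\<close> \<open>card (M \<union> {1..s}) = card C\<close> by (simp_all add: B_def)
  have "card {x\<in>B. t \<le> x} \<le> card {c\<in>C. t \<le> c}" for t
  proof (cases "s < t")
    case True
    then have "{x\<in>B. t \<le> x} = {x\<in>M. t \<le> x}" by (auto simp: B_def)
    then show ?thesis using M_tails by simp
  next
    case False
    then have "{1..<t} \<subseteq> B" by (auto simp: B_def)
    moreover have "{x\<in>B. t \<le> x} = B - {1..<t}"
      using assms(1) by (auto simp: B_def)
    ultimately have "card {x\<in>B. t \<le> x} = card B - (t - 1)"
      using card_Diff_subset[of "{1..<t}" B] \<open>finite B\<close> by simp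
    also have "\<dots> \<le> card (C - {1..<t})"
      using diff_card_le_card_Diff[of "{1..<t}" C] card_B by simp
    also have "C - {1..<t} = {c\<in>C. t \<le> c}" using assms(2) by auto
    finally show ?thesis .
  qed
  then have "gale_le B C"
    using gale_le_iff_card_tails[OF \<open>finite B\<close> \<open>finite C\<close> card_B] by blast
  moreover have "B \<subseteq> {1..n}" using assms(1) \<open>s \<le> n\<close> by (auto simp: B_def)
  ultimately have "B \<in> schubert_bases n C" by (simp add: schubert_bases_def)
  then show ?thesis by (auto simp: B_def)
qed

lemma card_le_schubert_rank:
  assumes "M \<subseteq> A" "M \<subseteq> {1..n}" "C \<subseteq> {1..n}"
    and "\<And>t. card {x\<in>M. t \<le> x} \<le> card {c\<in>C. t \<le> c}"
  shows "card M \<le> schubert_rank n C A"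
proof -
  obtain B where B: "B \<in> schubert_bases n C" "M \<subseteq> B"
    using schubert_independent_subset_basis[OF assms(2-4)] by blast
  then have "finite B"
    by (simp add: schubert_bases_def finite_subset[of B "{1..n}"])
  then have "card M \<le> card (A \<inter> B)"
    using assms(1) B(2) by (simp add: card_mono)
  also have "\<dots> \<le> schubert_rank n C A"
    unfolding schubert_rank_def
    using B(1) finite_schubert_bases by (intro Max_ge) auto
  finally show ?thesis .
qed

lemma ran_eq_image_dom: "ran F = (\<lambda>i. the (F i)) ` dom F"
  unfolding ran_def by force

lemma inj_on_the_dom:
  assumes "inj_on F (dom F)"
  shows "inj_on (\<lambda>i. the (F i)) (dom F)"
  using assms by (auto simp: inj_on_def dom_def)

lemma card_ran_eq_card_dom:
  assumes "inj_on F (dom F)"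
  shows "card (ran F) = card (dom F)"
  using card_image[OF inj_on_the_dom[OF assms]] by (simp add: ran_eq_image_dom)

lemma exists_threshold_above_gaps:
  fixes C D :: "nat set"
  assumes "finite C"
  obtains t where "{c\<in>C. t \<le> c} \<subseteq> D" and "\<And>x. x < t \<Longrightarrow> \<exists>e\<in>C - D. x \<le> e \<and> e < t"
proof (cases "C - D = {}")
  case True
  then show ?thesis using that[of 0] by auto
next
  case False
  define e where "e = Max (C - D)"
  have "finite (C - D)" using assms by simp
  then have "e \<in> C - D" and e_max: "\<And>c. c \<in> C - D \<Longrightarrow> c \<le> e"
    unfolding e_def using Max_in[OF _ False] Max_ge by blast+
  show ?thesis
  proof (rule that[of "Suc e"])
    show "{c\<in>C. Suc e \<le> c} \<subseteq> D"
      using e_max not_less_eq_eq by blast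
    show "\<exists>e'\<in>C - D. x \<le> e' \<and> e' < Suc e" if "x < Suc e" for x
      using \<open>e \<in> C - D\<close> that by (intro bexI[of _ e]) auto
  qed
qed

(* S is the set of entries processed so far; the last clause is the greedy property:
   an entry is never placed below an empty box that could have held it. *)
definition greedy_filling :: "nat set \<Rightarrow> nat set \<Rightarrow> (nat \<Rightarrow> nat option) \<Rightarrow> bool" where
  "greedy_filling C S F \<longleftrightarrow>
     dom F \<subseteq> C \<and> ran F \<subseteq> S \<and> (\<forall>i x. F i = Some x \<longrightarrow> x \<le> i) \<and> inj_on F (dom F) \<and>
     (\<forall>x\<in>S. \<forall>e\<in>C - dom F. x \<le> e \<longrightarrow> (\<exists>i\<le>e. F i = Some x))"

lemma greedy_filling_empty: "greedy_filling C {} Map.empty"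
  by (simp add: greedy_filling_def)

lemma greedy_filling_map_upd:
  assumes "greedy_filling C S F" "x \<notin> S"
    and "m \<in> C" "F m = None" "x \<le> m"
    and topmost: "\<And>e. e \<in> C \<Longrightarrow> F e = None \<Longrightarrow> x \<le> e \<Longrightarrow> m \<le> e"
  shows "greedy_filling C (insert x S) (F(m \<mapsto> x))"
proof -
  have "x \<notin> ran F" using assms(1,2) by (auto simp: greedy_filling_def)
  then have "inj_on (F(m \<mapsto> x)) (dom (F(m \<mapsto> x)))"
    using assms(1) \<open>F m = None\<close> by (auto simp: greedy_filling_def inj_on_def ran_def)
  moreover have "\<exists>i\<le>e. (F(m \<mapsto> x)) i = Some y"
    if y_e: "y \<in> insert x S" "e \<in> C - dom (F(m \<mapsto> x))" "y \<le> e" for y e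
  proof (cases "y = x")
    case True
    then show ?thesis using y_e topmost by (intro exI[of _ m]) auto
  next
    case False
    have "y \<in> S" "e \<in> C - dom F" using False y_e by auto
    then obtain i where "i \<le> e" "F i = Some y"
      using y_e(3) assms(1) unfolding greedy_filling_def by blast
    then show ?thesis using \<open>F m = None\<close> by (intro exI[of _ i]) auto
  qed
  moreover have "dom (F(m \<mapsto> x)) \<subseteq> C" "ran (F(m \<mapsto> x)) \<subseteq> insert x S"
    "\<forall>i y. (F(m \<mapsto> x)) i = Some y \<longrightarrow> y \<le> i"
    using assms(1) \<open>m \<in> C\<close> \<open>F m = None\<close> \<open>x \<le> m\<close>
    by (auto simp: greedy_filling_def)
  ultimately show ?thesis
    unfolding greedy_filling_def by blast
qed

lemma greedy_filling_fill_step: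
  assumes "finite C" "greedy_filling C S F" "x \<notin> S"
  shows "greedy_filling C (insert x S) (fill_step C F x)"
proof -
  define R where "R = {i \<in> C. F i = None \<and> x \<le> i}"
  show ?thesis
  proof (cases "R = {}")
    case True
    then have "fill_step C F x = F" by (simp add: fill_step_def R_def)
    moreover have "\<not> x \<le> e" if "e \<in> C - dom F" for e
      using True that by (auto simp: R_def)
    ultimately show ?thesis
      using assms(2) by (auto simp: greedy_filling_def)
  next
    case False
    have "finite R" using assms(1) by (simp add: R_def)
    then have "Min R \<in> R" and "\<And>e. e \<in> R \<Longrightarrow> Min R \<le> e"
      using False by simp_all
    moreover have "fill_step C F x = F(Min R \<mapsto> x)"
      using False unfolding fill_step_def Let_def R_def[symmetric] by simp
    ultimately show ?thesis
      using greedy_filling_map_upd[OF assms(2,3), of "Min R"] by (simp add: R_def)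
  qed
qed

lemma greedy_filling_filling:
  assumes "finite C" "distinct xs"
  shows "greedy_filling C (set xs) (filling C xs)"
  using assms(2)
proof (induction xs rule: rev_induct)
  case Nil
  then show ?case by (simp add: filling_def greedy_filling_empty)
next
  case (snoc x xs)
  then show ?case
    using greedy_filling_fill_step[OF assms(1)] by (simp add: filling_def)
qed

lemma greedy_filling_bij_betw_below:
  assumes "greedy_filling C S F"
    and gap: "\<And>x. x < t \<Longrightarrow> \<exists>e\<in>C - dom F. x \<le> e \<and> e < t"
  shows "bij_betw (\<lambda>i. the (F i)) {i\<in>dom F. i < t} {x\<in>S. x < t}"
proof (rule bij_betw_imageI)
  have ran_S: "ran F \<subseteq> S" and below: "\<And>i x. F i = Some x \<Longrightarrow> x \<le> i"
    and inj: "inj_on F (dom F)"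
    and greedy: "\<And>x e. x \<in> S \<Longrightarrow> e \<in> C - dom F \<Longrightarrow> x \<le> e \<Longrightarrow> \<exists>i\<le>e. F i = Some x"
    using assms(1) unfolding greedy_filling_def by blast+
  show "inj_on (\<lambda>i. the (F i)) {i\<in>dom F. i < t}"
    using inj_on_the_dom[OF inj] by (rule inj_on_subset) auto
  show "(\<lambda>i. the (F i)) ` {i\<in>dom F. i < t} = {x\<in>S. x < t}"
  proof
    show "(\<lambda>i. the (F i)) ` {i\<in>dom F. i < t} \<subseteq> {x\<in>S. x < t}"
      using ran_S below by (force simp: ran_def)
    show "{x\<in>S. x < t} \<subseteq> (\<lambda>i. the (F i)) ` {i\<in>dom F. i < t}"
    proof
      fix x assume "x \<in> {x\<in>S. x < t}"
      then obtain e where "e \<in> C - dom F" "x \<le> e" "e < t" "x \<in> S" using gap by blast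
      then obtain i where "i \<le> e" "F i = Some x" using greedy by blast
      then show "x \<in> (\<lambda>i. the (F i)) ` {i\<in>dom F. i < t}"
        using \<open>e < t\<close> by (intro rev_image_eqI[of i]) auto
    qed
  qed
qed

lemma greedy_filling_card_dom:
  assumes "finite C" "greedy_filling C S F"
  obtains t where "card (dom F) = card {x\<in>S. x < t} + card {c\<in>C. t \<le> c}"
proof -
  obtain t where full: "{c\<in>C. t \<le> c} \<subseteq> dom F"
    and gap: "\<And>x. x < t \<Longrightarrow> \<exists>e\<in>C - dom F. x \<le> e \<and> e < t"
    using exists_threshold_above_gaps[OF assms(1)] by blast
  have "dom F \<subseteq> C" using assms(2) by (simp add: greedy_filling_def)
  then have "finite (dom F)" using assms(1) finite_subset by blast
  have "dom F = {i\<in>dom F. i < t} \<union> {c\<in>C. t \<le> c}"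
    and "{i\<in>dom F. i < t} \<inter> {c\<in>C. t \<le> c} = {}"
    using full \<open>dom F \<subseteq> C\<close> by auto
  then have "card (dom F) = card {i\<in>dom F. i < t} + card {c\<in>C. t \<le> c}"
    using \<open>finite (dom F)\<close> by (metis card_Un_disjoint finite_Un)
  also have "card {i\<in>dom F. i < t} = card {x\<in>S. x < t}"
    using greedy_filling_bij_betw_below[OF assms(2) gap] by (rule bij_betw_same_card)
  finally show ?thesis by (rule that)
qed

lemma greedy_filling_ran_tails:
  assumes "finite C" "greedy_filling C S F"
  shows "card {x\<in>ran F. t \<le> x} \<le> card {c\<in>C. t \<le> c}"
proof -
  have dom_C: "dom F \<subseteq> C" and below: "\<And>i x. F i = Some x \<Longrightarrow> x \<le> i"
    using assms(2) unfolding greedy_filling_def by blast+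
  have fin: "finite {i\<in>dom F. t \<le> i}"
    by (rule finite_subset[of _ C]) (use dom_C assms(1) in auto)
  have "{x\<in>ran F. t \<le> x} \<subseteq> (\<lambda>i. the (F i)) ` {i\<in>dom F. t \<le> i}"
    using below by (force simp: ran_def)
  then have "card {x\<in>ran F. t \<le> x} \<le> card ((\<lambda>i. the (F i)) ` {i\<in>dom F. t \<le> i})"
    using fin by (simp add: card_mono)
  also have "\<dots> \<le> card {i\<in>dom F. t \<le> i}"
    using fin by (rule card_image_le)
  also have "\<dots> \<le> card {c\<in>C. t \<le> c}"
    using dom_C assms(1) by (intro card_mono) auto
  finally show ?thesis .
qed

theorem theorem3p3:
  fixes n k :: nat and C S :: "nat set" and \<pi> :: "nat list"
  assumes "C \<subseteq> {1..n}"
    and "S \<subseteq> {1..n}" and "card S = k"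
    and "distinct \<pi>" and "set \<pi> = S"
  shows "schubert_rank n C S = filling_size (filling C \<pi>)"
proof -
  have "finite C" "finite S" using assms(1,2) finite_subset by blast+
  define F where "F = filling C \<pi>"
  have greedy: "greedy_filling C S F"
    using greedy_filling_filling[OF \<open>finite C\<close> assms(4)] assms(5) by (simp add: F_def)
  then have "inj_on F (dom F)" and "ran F \<subseteq> S" by (simp_all add: greedy_filling_def)
  obtain t where "card (dom F) = card {x\<in>S. x < t} + card {c\<in>C. t \<le> c}"
    using greedy_filling_card_dom[OF \<open>finite C\<close> greedy] .
  then have "schubert_rank n C S \<le> card (dom F)"
    using schubert_rank_le[OF assms(1) \<open>finite S\<close>] by simp
  moreover have "card (dom F) \<le> schubert_rank n C S"
  proof -
    have "card (dom F) = card (ran F)"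
      using card_ran_eq_card_dom[OF \<open>inj_on F (dom F)\<close>] by simp
    also have "\<dots> \<le> schubert_rank n C S"
      using \<open>ran F \<subseteq> S\<close> assms(1,2) greedy_filling_ran_tails[OF \<open>finite C\<close> greedy]
      by (intro card_le_schubert_rank) auto
    finally show ?thesis .
  qed
  ultimately show ?thesis by (simp add: filling_size_def F_def)
qed

end
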